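(* (1) If $v$ is a valuation over $\mathcal M_{\bf Tm}$, then the functions $v_1:For\to A_{\bf Dm}$ and $v_2:For\to A_{\bf Km}$ given by $v_1(\alpha)=v_2(\alpha)=v(\alpha)$ for every formula $\alpha$ are valuations over $\mathcal M_{\bf Dm}$ and $\mathcal M_{\bf Km}$, respectively. (2) If $v$ is a valuation over $\mathcal M_{\bf Dm}$, then the function $v_1:For\to A_{\bf Km}$ given by $v_1(\alpha)=v(\alpha)$ for every formula $\alpha$ is a valuation over $\mathcal M_{\bf Km}$.
   Context: Formulas are built from a denumerable set of propositional variables by the unary connectives $\neg$, $\Box$ and the binary connective $\to$; $For$ is the set of all formulas. An Nmatrix has a domain $A$, designated values $D\subseteq A$ and, for each connective, a multioperation giving nonempty subsets of $A$; a valuation over it is $v:For\to A$ with $v(\neg\alpha)\in\tilde\neg(v(\alpha))$, $v(\Box\alpha)\in\tilde\Box(v(\alpha))$, $v(\alpha\to\beta)\in v(\alpha)\tilde\to v(\beta)$. $\mathcal M_{\bf Km}$: domain $A_{\bf Km}=\{T^+,C^+,F^+,I^+,T^-,C^-,F^-,I^-\}$, designated $\{T^+,C^+,F^+,I^+\}$. Negation: $\tilde\neg T^+=\{F^-\}$, $\tilde\neg C^+=\{C^-\}$, $\tilde\neg F^+=\{T^-\}$, $\tilde\neg I^+=\{I^-\}$, $\tilde\neg T^-=\{F^+\}$, $\tilde\neg C^-=\{C^+\}$, $\tilde\neg F^-=\{T^+\}$, $\tilde\neg I^-=\{I^+\}$. $\tilde\Box x=\{T^+,C^+,F^+,I^+\}$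 if $x\in\{T^+,T^-,I^+,I^-\}$ and $\tilde\Box x=\{T^-,C^-,F^-,I^-\}$ otherwise. Implication (row $x$, column $y$): $$\begin{array}{c|cccccccc} \to & T^+ & C^+ & F^+ & I^+ & T^- & C^- & F^- & I^-\\\hline T^+ & \{T^+\}&\{C^+\}&\{F^+\}&\{I^+\}&\{T^-\}&\{C^-\}&\{F^-\}&\{I^-\}\\ C^+ & \{T^+\}&\{T^+,C^+\}&\{C^+\}&\{I^+\}&\{T^-\}&\{T^-,C^-\}&\{C^-\}&\{I^-\}\\ F^+ & \{T^+\}&\{T^+\}&\{T^+\}&\{I^+\}&\{T^-\}&\{T^-\}&\{T^-\}&\{I^-\}\\ I^+ & \{I^+\}&\{I^+\}&\{I^+\}&\{I^+\}&\{I^-\}&\{I^-\}&\{I^-\}&\{I^-\}\\ T^- & \{T^+\}&\{C^+\}&\{F^+\}&\{I^+\}&\{T^+\}&\{C^+\}&\{F^+\}&\{I^+\}\\ C^- & \{T^+\}&\{T^+,C^+\}&\{C^+\}&\{I^+\}&\{T^+\}&\{T^+,C^+\}&\{C^+\}&\{I^+\}\\ F^- & \{T^+\}&\{T^+\}&\{T^+\}&\{I^+\}&\{T^+\}&\{T^+\}&\{T^+\}&\{I^+\}\\ I^- & \{I^+\}&\{I^+\}&\{I^+\}&\{I^+\}&\{I^+\}&\{I^+\}&\{I^+\}&\{I^+\}\end{array}$$ $\mathcal M_{\bf Dm}$: domain $A_{\bf Dm}=\{T^+,C^+,F^+,T^-,C^-,F^-\}$, designated $\{T^+,C^+,F^+\}$;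 negation and implication are the restrictions of those of $\mathcal M_{\bf Km}$ to this domain; $\tilde\Box x=\{T^+,C^+,F^+\}$ if $x\in\{T^+,T^-\}$ and $\tilde\Box x=\{T^-,C^-,F^-\}$ otherwise. $\mathcal M_{\bf Tm}$: domain $A_{\bf Tm}=\{T^+,C^+,C^-,F^-\}$, designated $\{T^+,C^+\}$; $\tilde\neg T^+=\{F^-\}$, $\tilde\neg C^+=\{C^-\}$, $\tilde\neg C^-=\{C^+\}$, $\tilde\neg F^-=\{T^+\}$; $x\tilde\to y$ is the intersection of the corresponding $\mathcal M_{\bf Km}$ entry with $A_{\bf Tm}$; $\tilde\Box T^+=\{T^+,C^+\}$ and $\tilde\Box x=\{C^-,F^-\}$ for $x\neq T^+$. *)

theory Defs
  imports Main
begin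

datatype For = Var nat | Neg For | Box For | Imp For For

datatype tv = Tp | Cp | Fp | Ip | Tm | Cm | Fm | Im

text \<open>A (non-deterministic) matrix: domain, designated values, multioperations.
  The multioperations are given as functions on the whole type tv; only their
  values on the domain matter.\<close>
record nmatrix =
  dom :: "tv set"
  des :: "tv set"
  neg_op :: "tv \<Rightarrow> tv set"
  box_op :: "tv \<Rightarrow> tv set"
  imp_op :: "tv \<Rightarrow> tv \<Rightarrow> tv set"

definition valuation :: "nmatrix \<Rightarrow> (For \<Rightarrow> tv) \<Rightarrow> bool" where
  "valuation M v \<longleftrightarrow>
     (\<forall>\<alpha>. v \<alpha> \<in> dom M) \<and>
     (\<forall>\<alpha>. v (Neg \<alpha>) \<in> neg_op M (v \<alpha>)) \<and>
     (\<forall>\<alpha>. v (Box \<alpha>) \<in> box_op M (v \<alpha>)) \<and>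
     (\<forall>\<alpha> \<beta>. v (Imp \<alpha> \<beta>) \<in> imp_op M (v \<alpha>) (v \<beta>))"

fun negK :: "tv \<Rightarrow> tv set" where
  "negK Tp = {Fm}" | "negK Cp = {Cm}" | "negK Fp = {Tm}" | "negK Ip = {Im}"
| "negK Tm = {Fp}" | "negK Cm = {Cp}" | "negK Fm = {Tp}" | "negK Im = {Ip}"

definition boxK :: "tv \<Rightarrow> tv set" where
  "boxK x = (if x \<in> {Tp, Tm, Ip, Im} then {Tp, Cp, Fp, Ip} else {Tm, Cm, Fm, Im})"

fun impK :: "tv \<Rightarrow> tv \<Rightarrow> tv set" where
  "impK Tp y = {y}"
| "impK Cp Tp = {Tp}" | "impK Cp Cp = {Tp, Cp}" | "impK Cp Fp = {Cp}" | "impK Cp Ip = {Ip}"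
| "impK Cp Tm = {Tm}" | "impK Cp Cm = {Tm, Cm}" | "impK Cp Fm = {Cm}" | "impK Cp Im = {Im}"
| "impK Fp Tp = {Tp}" | "impK Fp Cp = {Tp}" | "impK Fp Fp = {Tp}" | "impK Fp Ip = {Ip}"
| "impK Fp Tm = {Tm}" | "impK Fp Cm = {Tm}" | "impK Fp Fm = {Tm}" | "impK Fp Im = {Im}"
| "impK Ip Tp = {Ip}" | "impK Ip Cp = {Ip}" | "impK Ip Fp = {Ip}" | "impK Ip Ip = {Ip}"
| "impK Ip Tm = {Im}" | "impK Ip Cm = {Im}" | "impK Ip Fm = {Im}" | "impK Ip Im = {Im}"
| "impK Tm Tp = {Tp}" | "impK Tm Cp = {Cp}" | "impK Tm Fp = {Fp}" | "impK Tm Ip = {Ip}"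
| "impK Tm Tm = {Tp}" | "impK Tm Cm = {Cp}" | "impK Tm Fm = {Fp}" | "impK Tm Im = {Ip}"
| "impK Cm Tp = {Tp}" | "impK Cm Cp = {Tp, Cp}" | "impK Cm Fp = {Cp}" | "impK Cm Ip = {Ip}"
| "impK Cm Tm = {Tp}" | "impK Cm Cm = {Tp, Cp}" | "impK Cm Fm = {Cp}" | "impK Cm Im = {Ip}"
| "impK Fm Tp = {Tp}" | "impK Fm Cp = {Tp}" | "impK Fm Fp = {Tp}" | "impK Fm Ip = {Ip}"
| "impK Fm Tm = {Tp}" | "impK Fm Cm = {Tp}" | "impK Fm Fm = {Tp}" | "impK Fm Im = {Ip}"
| "impK Im y = {Ip}"

definition M_Km :: nmatrix where
  "M_Km = \<lparr> dom = {Tp, Cp, Fp, Ip, Tm, Cm, Fm, Im}, des = {Tp, Cp, Fp, Ip},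
            neg_op = negK, box_op = boxK, imp_op = impK \<rparr>"

definition boxD :: "tv \<Rightarrow> tv set" where
  "boxD x = (if x \<in> {Tp, Tm} then {Tp, Cp, Fp} else {Tm, Cm, Fm})"

text \<open>M_Dm: negation and implication are the restrictions of those of M_Km
  (on the domain of M_Dm they already yield subsets of that domain).\<close>
definition M_Dm :: nmatrix where
  "M_Dm = \<lparr> dom = {Tp, Cp, Fp, Tm, Cm, Fm}, des = {Tp, Cp, Fp},
            neg_op = negK, box_op = boxD, imp_op = impK \<rparr>"

fun negT :: "tv \<Rightarrow> tv set" where
  "negT Tp = {Fm}" | "negT Cp = {Cm}" | "negT Cm = {Cp}" | "negT Fm = {Tp}"
| "negT x = negK x"

definition boxT :: "tv \<Rightarrow> tv set" where
  "boxT x = (if x = Tp then {Tp, Cp} else {Cm, Fm})"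

definition M_Tm :: nmatrix where
  "M_Tm = \<lparr> dom = {Tp, Cp, Cm, Fm}, des = {Tp, Cp},
            neg_op = negT, box_op = boxT,
            imp_op = (\<lambda>x y. impK x y \<inter> {Tp, Cp, Cm, Fm}) \<rparr>"

end

theory Submission
  imports Defs
begin

text \<open>Designated values play no role in the notion of valuation, so the refinement
  relation below only constrains the domain and the multioperations.\<close>

definition refinement :: "nmatrix \<Rightarrow> nmatrix \<Rightarrow> bool" where
  "refinement M N \<longleftrightarrow>
     dom M \<subseteq> dom N \<and>
     (\<forall>x \<in> dom M. neg_op M x \<subseteq> neg_op N x) \<and>
     (\<forall>x \<in> dom M. box_op M x \<subseteq> box_op N x) \<and>
     (\<forall>x \<in> dom M. \<forall>y \<in> dom M. imp_op M x y \<subseteq> imp_op N x y)"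

lemma refinement_trans:
  assumes "refinement L M" and "refinement M N"
  shows "refinement L N"
  using assms unfolding refinement_def by blast

lemma valuation_refinement:
  assumes "refinement M N" and "valuation M v"
  shows "valuation N v"
proof -
  have "v \<alpha> \<in> dom M" for \<alpha>
    using \<open>valuation M v\<close> by (simp add: valuation_def)
  with assms show ?thesis
    unfolding refinement_def valuation_def by blast
qed

lemma refinement_M_Tm_M_Dm: "refinement M_Tm M_Dm"
  unfolding refinement_def M_Tm_def M_Dm_def by (auto simp: boxT_def boxD_def)

lemma refinement_M_Dm_M_Km: "refinement M_Dm M_Km"
  unfolding refinement_def M_Dm_def M_Km_def by (auto simp: boxD_def boxK_def)

theorem mainTheorem20:
  shows "(\<forall>v. valuation M_Tm v \<longrightarrow> valuation M_Dm v \<and> valuation M_Km v) \<and>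
         (\<forall>v. valuation M_Dm v \<longrightarrow> valuation M_Km v)"
  using valuation_refinement refinement_M_Tm_M_Dm refinement_M_Dm_M_Km
    refinement_trans[OF refinement_M_Tm_M_Dm refinement_M_Dm_M_Km]
  by blast

end
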